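(* Assume $b_1<n^*$ and $b_2<m^*$, and let $\epsilon=b_1b_2\bigl(\frac{1}{\max\{b_1,m^*\}}-\frac{1}{n^*}\bigr)$. For every minimum set cover $S^{\min}$ (a set cover of size $n^*$) and every maximum set packing $T^{\max}$ (a set packing of size $m^*$): (i.a) $(\sigma^1(S^{\min},b_1),\sigma^2(T^{\max},b_2))$ is an $\epsilon$-Nash equilibrium of $\Gamma(b_1,b_2)$; (i.b) for every Nash equilibrium $(\sigma^{1*},\sigma^{2*})$ of $\Gamma(b_1,b_2)$ and each $j\in\{1,2\}$, $|U_j(\sigma^1(S^{\min},b_1),\sigma^2(T^{\max},b_2))-U_j(\sigma^{1*},\sigma^{2*})|\le\epsilon$; (ii) $\min_{\sigma^2} r(\sigma^1(S^{\min},b_1),\sigma^2)=\frac{b_1}{n^*}$, the minimum being over all $\sigma^2\in\Delta(\mathcal A_2)$ supported on nonempty attack plans, and for every Nash equilibrium $(\sigma^{1*},\sigma^{2*})$ of $\Gamma(b_1,b_2)$, $\frac{b_1}{n^*}\ge\frac{\max\{b_1,m^*\}}{n^*}\,r(\sigma^{1*},\sigma^{2*})$.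
   Context: Detection model: finite nonempty sets $\mathcal V$, $\mathcal E$, monitoring sets $\mathcal C_i\subseteq\mathcal E$ ($i\in\mathcal V$) with every $e\in\mathcal E$ in some $\mathcal C_i$; $\mathcal C_S=\bigcup_{i\in S}\mathcal C_i$; $F(S,T)=|\mathcal C_S\cap T|$. Set cover: $S\subseteq\mathcal V$ with $\mathcal C_S=\mathcal E$; $n^*$ = minimum size of a set cover. Set packing: $T\subseteq\mathcal E$ with $|\mathcal C_i\cap T|\le1$ for all $i$; $m^*$ = maximum size of a set packing. Game $\Gamma(b_1,b_2)$ ($b_1,b_2$ positive integers): $\mathcal A_1=\{S\subseteq\mathcal V:|S|\le b_1\}$, $\mathcal A_2=\{T\subseteq\mathcal E:|T|\le b_2\}$; mixed strategies $\sigma^1\in\Delta(\mathcal A_1)$, $\sigma^2\in\Delta(\mathcal A_2)$ (independent); payoffs $U_1=\mathbb E[F(S,T)]$, $U_2=\mathbb E[|T|]-\mathbb E[F(S,T)]$. Nash equilibrium as usual; for $\epsilon\ge0$ an $\epsilon$-Nash equilibrium is a profile $(\sigma^{1\prime},\sigma^{2\prime})$ with $U_1(\sigma^{1\prime},\sigma^{2\prime})\ge U_1(\sigma^1,\sigma^{2\prime})-\epsilon$ for all $\sigma^1$ and $U_2(\sigma^{1\prime},\sigma^{2\prime})\ge U_2(\sigma^{1\prime},\sigma^2)-\epsilon$ for all $\sigma^2$. Expected detection rate: $r(\sigma)=\mathbb E[F(S,T)/|T|]$ for profiles whose attack strategy is supported on nonempty sets. Cyclic strategies: for $S=\{i_1,\dots,i_n\}$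 (fixed enumeration) with $n\ge b_1$, $S^k=\{i_k,\dots,i_{k+b_1-1}\}$ with indices cyclic mod $n$, $k=1,\dots,n$, and $\sigma^1(S,b_1)$ puts probability $1/n$ on each $S^k$; for $T=\{e_1,\dots,e_m\}$ with $m\ge b_2$, $T^l=\{e_l,\dots,e_{l+b_2-1}\}$ cyclically and $\sigma^2(T,b_2)$ puts probability $1/m$ on each $T^l$. *)

theory Defs
  imports "HOL-Probability.Probability"
begin

definition detection_model :: "'v set \<Rightarrow> 'e set \<Rightarrow> ('v \<Rightarrow> 'e set) \<Rightarrow> bool" where
  "detection_model V E C \<longleftrightarrow> finite V \<and> V \<noteq> {} \<and> finite E \<and> E \<noteq> {} \<and>
     (\<forall>i\<in>V. C i \<subseteq> E) \<and> (\<forall>e\<in>E. \<exists>i\<in>V. e \<in> C i)"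

definition CS :: "('v \<Rightarrow> 'e set) \<Rightarrow> 'v set \<Rightarrow> 'e set" where
  "CS C S = (\<Union>i\<in>S. C i)"

definition Fdet :: "('v \<Rightarrow> 'e set) \<Rightarrow> 'v set \<Rightarrow> 'e set \<Rightarrow> nat" where
  "Fdet C S T = card (CS C S \<inter> T)"

definition set_cover :: "'v set \<Rightarrow> 'e set \<Rightarrow> ('v \<Rightarrow> 'e set) \<Rightarrow> 'v set \<Rightarrow> bool" where
  "set_cover V E C S \<longleftrightarrow> S \<subseteq> V \<and> CS C S = E"

definition set_packing :: "'v set \<Rightarrow> 'e set \<Rightarrow> ('v \<Rightarrow> 'e set) \<Rightarrow> 'e set \<Rightarrow> bool" where
  "set_packing V E C T \<longleftrightarrow> T \<subseteq> E \<and> (\<forall>i\<in>V. card (C i \<inter> T) \<le> 1)"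

definition nstar :: "'v set \<Rightarrow> 'e set \<Rightarrow> ('v \<Rightarrow> 'e set) \<Rightarrow> nat" where
  "nstar V E C = Min {card S | S. set_cover V E C S}"

definition mstar :: "'v set \<Rightarrow> 'e set \<Rightarrow> ('v \<Rightarrow> 'e set) \<Rightarrow> nat" where
  "mstar V E C = Max {card T | T. set_packing V E C T}"

definition A1 :: "'v set \<Rightarrow> nat \<Rightarrow> 'v set set" where
  "A1 V b1 = {S. S \<subseteq> V \<and> card S \<le> b1}"

definition A2 :: "'e set \<Rightarrow> nat \<Rightarrow> 'e set set" where
  "A2 E b2 = {T. T \<subseteq> E \<and> card T \<le> b2}"

definition U1 :: "('v \<Rightarrow> 'e set) \<Rightarrow> 'v set pmf \<Rightarrow> 'e set pmf \<Rightarrow> real" where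
  "U1 C \<sigma>1 \<sigma>2 = measure_pmf.expectation (pair_pmf \<sigma>1 \<sigma>2) (\<lambda>(S, T). real (Fdet C S T))"

definition U2 :: "('v \<Rightarrow> 'e set) \<Rightarrow> 'v set pmf \<Rightarrow> 'e set pmf \<Rightarrow> real" where
  "U2 C \<sigma>1 \<sigma>2 = measure_pmf.expectation (pair_pmf \<sigma>1 \<sigma>2)
      (\<lambda>(S, T). real (card T) - real (Fdet C S T))"

definition detection_rate :: "('v \<Rightarrow> 'e set) \<Rightarrow> 'v set pmf \<Rightarrow> 'e set pmf \<Rightarrow> real" where
  "detection_rate C \<sigma>1 \<sigma>2 = measure_pmf.expectation (pair_pmf \<sigma>1 \<sigma>2)
      (\<lambda>(S, T). real (Fdet C S T) / real (card T))"

definition eps_nash :: "'v set \<Rightarrow> 'e set \<Rightarrow> ('v \<Rightarrow> 'e set) \<Rightarrow> nat \<Rightarrow> nat \<Rightarrow> real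
    \<Rightarrow> 'v set pmf \<Rightarrow> 'e set pmf \<Rightarrow> bool" where
  "eps_nash V E C b1 b2 \<epsilon> \<sigma>1 \<sigma>2 \<longleftrightarrow>
     set_pmf \<sigma>1 \<subseteq> A1 V b1 \<and> set_pmf \<sigma>2 \<subseteq> A2 E b2 \<and>
     (\<forall>\<tau>1. set_pmf \<tau>1 \<subseteq> A1 V b1 \<longrightarrow> U1 C \<sigma>1 \<sigma>2 \<ge> U1 C \<tau>1 \<sigma>2 - \<epsilon>) \<and>
     (\<forall>\<tau>2. set_pmf \<tau>2 \<subseteq> A2 E b2 \<longrightarrow> U2 C \<sigma>1 \<sigma>2 \<ge> U2 C \<sigma>1 \<tau>2 - \<epsilon>)"

definition nash :: "'v set \<Rightarrow> 'e set \<Rightarrow> ('v \<Rightarrow> 'e set) \<Rightarrow> nat \<Rightarrow> nat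
    \<Rightarrow> 'v set pmf \<Rightarrow> 'e set pmf \<Rightarrow> bool" where
  "nash V E C b1 b2 \<sigma>1 \<sigma>2 \<longleftrightarrow> eps_nash V E C b1 b2 0 \<sigma>1 \<sigma>2"

text \<open>A set is given by a fixed enumeration, i.e. a distinct list
  xs = [x_0, ..., x_(n-1)]; window k is {x_k, ..., x_(k+b-1)} with indices mod n (0-based),
  and the cyclic strategy picks k uniformly from {0..<n}.\<close>

definition cyc_window :: "'a list \<Rightarrow> nat \<Rightarrow> nat \<Rightarrow> 'a set" where
  "cyc_window xs b k = (\<lambda>j. xs ! ((k + j) mod length xs)) ` {0..<b}"

definition cyclic_strategy :: "'a list \<Rightarrow> nat \<Rightarrow> 'a set pmf" where
  "cyclic_strategy xs b = map_pmf (cyc_window xs b) (pmf_of_set {0..<length xs})"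

end

theory Submission
  imports Defs
begin

text \<open>
  Every vertex of a minimum cover is monitored by the cyclic defender with probability
  \<open>b1/n*\<close>, and every element is covered by some vertex of the cover, so each attacked element
  is detected with probability at least \<open>b1/n*\<close>. Dually, a plan of \<open>b1\<close> vertices monitors at most
  \<open>min b1 m*\<close> elements of a maximum packing, each attacked by the cyclic attacker with
  probability \<open>b2/m*\<close>, so it detects at most \<open>b1 b2 / max b1 m*\<close> attacks in expectation.
  These two guarantees pin the defender's payoff of the cyclic profile, and of every
  equilibrium, between \<open>b1 b2 / n*\<close> and \<open>b1 b2 / max b1 m*\<close>.

  At an equilibrium the attacker exhausts its budget: an attack with spare budget is a best
  response only if every defender plan in the support covers all elements outside it, and
  then \<open>n* \<le> |S| + |E - C_S|\<close> makes the attacker's payoff at least \<open>n* - b1\<close>, more than the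
  \<open>b2 (1 - b1/n*)\<close> the cyclic defender concedes. Hence the equilibrium detection rate is the
  defender's payoff divided by \<open>b2\<close>. The rate \<open>b1/n*\<close> of the cyclic defender is attained by
  attacking an element monitored by a single vertex of the minimum cover.
\<close>

lemma expectation_mono_finite:
  fixes f g :: "'a \<Rightarrow> real"
  assumes "finite (set_pmf p)" and "\<And>x. x \<in> set_pmf p \<Longrightarrow> f x \<le> g x"
  shows "measure_pmf.expectation p f \<le> measure_pmf.expectation p g"
  using assms by (intro integral_mono_AE) (auto simp: integrable_measure_pmf_finite AE_measure_pmf_iff)

lemma eq_on_support_if_expectation_ge:
  fixes f :: "'a \<Rightarrow> real"
  assumes fin: "finite (set_pmf p)" and le: "\<And>x. x \<in> set_pmf p \<Longrightarrow> f x \<le> c"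
    and ge: "c \<le> measure_pmf.expectation p f" and x: "x \<in> set_pmf p"
  shows "f x = c"
proof -
  have int: "integrable p (\<lambda>x. c - f x)" using fin by (rule integrable_measure_pmf_finite)
  have nonneg: "AE x in p. 0 \<le> c - f x" using le by (simp add: AE_measure_pmf_iff)
  have "measure_pmf.expectation p (\<lambda>x. c - f x) = c - measure_pmf.expectation p f"
    using fin by (simp add: integrable_measure_pmf_finite)
  then have "measure_pmf.expectation p (\<lambda>x. c - f x) = 0"
    using ge integral_nonneg_AE[OF nonneg] by linarith
  then have "AE x in p. c - f x = 0" using integral_nonneg_eq_0_iff_AE[OF int nonneg] by simp
  then show ?thesis using x by (simp add: AE_measure_pmf_iff)
qed

lemma expectation_pair_pmf_finite:
  fixes f :: "'a \<Rightarrow> 'b \<Rightarrow> real"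
  assumes p: "finite (set_pmf p)" and q: "finite (set_pmf q)"
  shows "measure_pmf.expectation (pair_pmf p q) (\<lambda>(x, y). f x y) =
         measure_pmf.expectation p (\<lambda>x. measure_pmf.expectation q (f x))"
proof -
  have "measure_pmf.expectation (pair_pmf p q) (\<lambda>(x, y). f x y)
      = (\<Sum>z\<in>set_pmf p \<times> set_pmf q. (case z of (x, y) \<Rightarrow> f x y) * pmf (pair_pmf p q) z)"
    using p q by (intro integral_measure_pmf_real) auto
  also have "\<dots> = (\<Sum>x\<in>set_pmf p. \<Sum>y\<in>set_pmf q. f x y * (pmf p x * pmf q y))"
    by (subst sum.cartesian_product) (auto intro!: sum.cong simp: pmf_pair)
  also have "\<dots> = (\<Sum>x\<in>set_pmf p. (\<Sum>y\<in>set_pmf q. f x y * pmf q y) * pmf p x)"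
    by (simp add: sum_distrib_left sum_distrib_right mult_ac)
  also have "\<dots> = (\<Sum>x\<in>set_pmf p. measure_pmf.expectation q (f x) * pmf p x)"
    using q by (simp add: integral_measure_pmf_real)
  also have "\<dots> = measure_pmf.expectation p (\<lambda>x. measure_pmf.expectation q (f x))"
    using p by (simp add: integral_measure_pmf_real)
  finally show ?thesis .
qed

lemma expectation_swap_finite:
  fixes f :: "'a \<Rightarrow> 'b \<Rightarrow> real"
  assumes "finite (set_pmf p)" and "finite (set_pmf q)"
  shows "measure_pmf.expectation p (\<lambda>x. measure_pmf.expectation q (f x)) =
         measure_pmf.expectation q (\<lambda>y. measure_pmf.expectation p (\<lambda>x. f x y))"
proof -
  have "measure_pmf.expectation (pair_pmf p q) (\<lambda>(x, y). f x y) =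
        measure_pmf.expectation (pair_pmf q p) (\<lambda>(y, x). f x y)"
    by (subst pair_commute_pmf) (simp add: case_prod_unfold)
  then show ?thesis using assms by (simp add: expectation_pair_pmf_finite)
qed

subsection \<open>Set covers and set packings\<close>

lemma finite_set_cover_cards:
  assumes "detection_model V E C"
  shows "finite {card S |S. set_cover V E C S}"
proof -
  have "finite (card ` Pow V)" using assms by (simp add: detection_model_def)
  then show ?thesis by (rule finite_subset[rotated]) (auto simp: set_cover_def)
qed

lemma nstar_le_card:
  assumes "detection_model V E C" and "set_cover V E C S"
  shows "nstar V E C \<le> card S"
  unfolding nstar_def using finite_set_cover_cards[OF assms(1)] assms(2) by (intro Min_le) auto

lemma min_set_cover_exists:
  assumes model: "detection_model V E C"
  obtains xs where "set_cover V E C (set xs)" and "distinct xs" and "length xs = nstar V E C"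
proof -
  have "set_cover V E C V"
    using model by (auto simp: detection_model_def set_cover_def CS_def)
  then have "nstar V E C \<in> {card S |S. set_cover V E C S}"
    unfolding nstar_def using finite_set_cover_cards[OF model] by (intro Min_in) auto
  then obtain S where S: "set_cover V E C S" "card S = nstar V E C" by auto
  moreover have "finite S"
    using model S(1) finite_subset unfolding detection_model_def set_cover_def by blast
  ultimately show ?thesis using that finite_distinct_list distinct_card by metis
qed

lemma set_cover_list_nonempty:
  assumes "detection_model V E C" and "set_cover V E C (set xs)"
  shows "xs \<noteq> []"
  using assms by (auto simp: detection_model_def set_cover_def CS_def)

lemma max_set_packing_exists:
  assumes "finite E"
  obtains ys where "set_packing V E C (set ys)" and "distinct ys" and "length ys = mstar V E C"
proof -
  have "set_packing V E C {}" by (simp add: set_packing_def)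
  moreover have "finite {card T |T. set_packing V E C T}"
  proof -
    have "finite (card ` Pow E)" using assms by simp
    then show ?thesis by (rule finite_subset[rotated]) (auto simp: set_packing_def)
  qed
  ultimately have "mstar V E C \<in> {card T |T. set_packing V E C T}"
    unfolding mstar_def by (intro Max_in) auto
  then obtain T where T: "set_packing V E C T" "card T = mstar V E C" by auto
  moreover have "finite T" using assms T(1) finite_subset by (auto simp: set_packing_def)
  ultimately show ?thesis using that finite_distinct_list distinct_card by metis
qed

lemma Fdet_le_card_of_set_packing:
  assumes "finite S" and "S \<subseteq> V" and "set_packing V E C T"
  shows "Fdet C S T \<le> card S"
proof -
  have "Fdet C S T = card (\<Union>i\<in>S. C i \<inter> T)" by (simp add: Fdet_def CS_def Int_UN_distrib2)
  also have "\<dots> \<le> (\<Sum>i\<in>S. card (C i \<inter> T))" using assms(1) by (rule card_UN_le)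
  also have "\<dots> \<le> (\<Sum>i\<in>S. 1)"
    using assms(2,3) by (intro sum_mono) (auto simp: set_packing_def)
  finally show ?thesis by simp
qed

lemma card_set_packing_le_card_set_cover:
  assumes "detection_model V E C" and "set_cover V E C S" and "set_packing V E C T"
  shows "card T \<le> card S"
proof -
  have "finite S"
    using assms(1,2) finite_subset unfolding detection_model_def set_cover_def by blast
  moreover have "CS C S \<inter> T = T" using assms(2,3) by (auto simp: set_cover_def set_packing_def)
  ultimately show ?thesis
    using Fdet_le_card_of_set_packing[of S V E C T] assms(2,3) by (simp add: Fdet_def set_cover_def)
qed

lemma nstar_le_card_add_card_uncovered:
  assumes model: "detection_model V E C" and S: "S \<subseteq> V"
  shows "nstar V E C \<le> card S + card (E - CS C S)"
proof -
  obtain g where g: "\<And>e. e \<in> E \<Longrightarrow> g e \<in> V \<and> e \<in> C (g e)"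
    using model unfolding detection_model_def by metis
  have "CS C (S \<union> g ` (E - CS C S)) \<subseteq> E"
    using model S g unfolding detection_model_def CS_def by blast
  moreover have "E \<subseteq> CS C (S \<union> g ` (E - CS C S))"
  proof
    fix e assume "e \<in> E"
    then show "e \<in> CS C (S \<union> g ` (E - CS C S))"
      using g[of e] by (cases "e \<in> CS C S") (auto simp: CS_def)
  qed
  ultimately have "set_cover V E C (S \<union> g ` (E - CS C S))"
    using S g by (auto simp: set_cover_def)
  then have "nstar V E C \<le> card (S \<union> g ` (E - CS C S))" by (rule nstar_le_card[OF model])
  also have "\<dots> \<le> card S + card (g ` (E - CS C S))" by (rule card_Un_le)
  also have "\<dots> \<le> card S + card (E - CS C S)"
    using model by (simp add: detection_model_def card_image_le)
  finally show ?thesis .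
qed

lemma min_set_cover_private_element:
  assumes model: "detection_model V E C"
    and S: "set_cover V E C S" "card S = nstar V E C" and x: "x \<in> S"
  shows "\<exists>e\<in>C x. \<forall>i\<in>S. e \<in> C i \<longrightarrow> i = x"
proof (rule ccontr)
  assume "\<not> ?thesis"
  then have "CS C (S - {x}) = CS C S" by (auto simp: CS_def)
  then have "set_cover V E C (S - {x})" using S(1) by (auto simp: set_cover_def)
  then have "nstar V E C \<le> card (S - {x})" by (rule nstar_le_card[OF model])
  moreover have "finite S"
    using model S(1) finite_subset unfolding detection_model_def set_cover_def by blast
  ultimately show False using card_Diff1_less[of S x] S(2) x by linarith
qed

subsection \<open>Cyclic strategies\<close>

lemma mod_add_left_cancel_less:
  fixes i j k n :: nat
  assumes "(k + i) mod n = (k + j) mod n" and "i < n" and "j < n"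
  shows "i = j"
proof -
  have "a = b" if "a \<le> b" "b < n" "(k + a) mod n = (k + b) mod n" for a b
  proof -
    have "n dvd (k + b) - (k + a)" using that mod_eq_dvd_iff_nat[of "k + a" "k + b" n] by simp
    then have "n dvd b - a" by simp
    moreover have "b - a < n" using that by simp
    ultimately have "b - a = 0" by (metis nat_dvd_not_less neq0_conv)
    then show "a = b" using \<open>a \<le> b\<close> by simp
  qed
  from this[of i j] this[of j i] assms show ?thesis by (cases "i \<le> j") auto
qed

lemma add_mod_eq_iff:
  fixes k j p n :: nat
  assumes "k < n" and "j < n" and "p < n"
  shows "(k + j) mod n = p \<longleftrightarrow> k = (p + n - j) mod n"
proof -
  have inverse: "((p + n - j) mod n + j) mod n = p"
    using assms by (simp add: mod_add_left_eq)
  show ?thesis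
  proof
    assume "(k + j) mod n = p"
    with inverse have "(k + j) mod n = ((p + n - j) mod n + j) mod n" by simp
    then show "k = (p + n - j) mod n"
      using assms by (intro mod_add_left_cancel_less[of j k n "(p + n - j) mod n"]) (auto simp: add.commute)
  qed (use inverse in simp)
qed

lemma cyc_window_subset: "xs \<noteq> [] \<Longrightarrow> cyc_window xs b k \<subseteq> set xs"
  unfolding cyc_window_def by auto

lemma card_cyc_window_le: "card (cyc_window xs b k) \<le> b"
  unfolding cyc_window_def using card_image_le[of "{0..<b}"] by simp

lemma card_cyc_window:
  assumes "distinct xs" and "b \<le> length xs"
  shows "card (cyc_window xs b k) = b"
proof -
  have "inj_on (\<lambda>j. xs ! ((k + j) mod length xs)) {0..<b}"
  proof (rule inj_onI)
    fix i j
    assume ij: "i \<in> {0..<b}" "j \<in> {0..<b}"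
      and eq: "xs ! ((k + i) mod length xs) = xs ! ((k + j) mod length xs)"
    then have "0 < length xs" using assms(2) by auto
    then have "(k + i) mod length xs = (k + j) mod length xs"
      using eq assms(1) by (simp add: nth_eq_iff_index_eq)
    then show "i = j" by (rule mod_add_left_cancel_less) (use ij assms(2) in auto)
  qed
  then show ?thesis unfolding cyc_window_def by (simp add: card_image)
qed

lemma card_cyc_windows_containing:
  assumes "distinct xs" and "b \<le> length xs" and "x \<in> set xs"
  shows "card {k \<in> {0..<length xs}. x \<in> cyc_window xs b k} = b"
proof -
  define n where "n = length xs"
  obtain p where p: "p < n" "x = xs ! p" using assms(3) by (auto simp: n_def in_set_conv_nth)
  have n0: "0 < n" using p(1) by simp
  have mem: "x \<in> cyc_window xs b k \<longleftrightarrow> (\<exists>j<b. (k + j) mod n = p)" for k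
  proof -
    have "x \<in> cyc_window xs b k \<longleftrightarrow> (\<exists>j\<in>{0..<b}. xs ! p = xs ! ((k + j) mod n))"
      unfolding cyc_window_def p(2) n_def by (rule image_iff)
    also have "\<dots> \<longleftrightarrow> (\<exists>j<b. (k + j) mod n = p)"
      using nth_eq_iff_index_eq[OF assms(1)] p(1) n0 n_def by auto
    finally show ?thesis .
  qed
  \<comment> \<open>The window starting at \<open>p - j\<close> (mod \<open>n\<close>) has \<open>x\<close> at offset \<open>j\<close>.\<close>
  have windows: "{k \<in> {0..<n}. x \<in> cyc_window xs b k} = (\<lambda>j. (p + n - j) mod n) ` {0..<b}"
  proof (intro equalityI subsetI)
    fix k assume "k \<in> {k \<in> {0..<n}. x \<in> cyc_window xs b k}"
    then obtain j where "k < n" "j < b" "(k + j) mod n = p" using mem by auto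
    then have "k = (p + n - j) mod n" using add_mod_eq_iff[of k n j p] p(1) assms(2) n_def by simp
    with \<open>j < b\<close> show "k \<in> (\<lambda>j. (p + n - j) mod n) ` {0..<b}" by auto
  next
    fix k assume "k \<in> (\<lambda>j. (p + n - j) mod n) ` {0..<b}"
    then obtain j where j: "j < b" "k = (p + n - j) mod n" by auto
    then have "k < n" using n0 by simp
    then have "(k + j) mod n = p" using add_mod_eq_iff[of k n j p] j p(1) assms(2) n_def by simp
    with \<open>k < n\<close> \<open>j < b\<close> show "k \<in> {k \<in> {0..<n}. x \<in> cyc_window xs b k}" using mem by auto
  qed
  have "inj_on (\<lambda>j. (p + n - j) mod n) {0..<b}"
  proof (rule inj_onI)
    fix i j assume ij: "i \<in> {0..<b}" "j \<in> {0..<b}" and eq: "(p + n - i) mod n = (p + n - j) mod n"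
    define k where "k = (p + n - i) mod n"
    have "k < n" using p(1) by (simp add: k_def)
    then have "(k + i) mod n = p" and "(k + j) mod n = p"
      using ij eq assms(2) p(1) n_def by (simp_all add: add_mod_eq_iff k_def)
    then show "i = j" using ij assms(2) n_def by (intro mod_add_left_cancel_less[of k i n j]) auto
  qed
  then show ?thesis using windows by (simp add: card_image n_def)
qed

lemma set_pmf_cyclic_strategy:
  "xs \<noteq> [] \<Longrightarrow> set_pmf (cyclic_strategy xs b) = cyc_window xs b ` {0..<length xs}"
  unfolding cyclic_strategy_def by simp

lemma finite_set_pmf_cyclic_strategy: "xs \<noteq> [] \<Longrightarrow> finite (set_pmf (cyclic_strategy xs b))"
  by (simp add: set_pmf_cyclic_strategy)

lemma expectation_cyclic_strategy:
  fixes f :: "'a set \<Rightarrow> real"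
  assumes "xs \<noteq> []"
  shows "measure_pmf.expectation (cyclic_strategy xs b) f =
         (\<Sum>k\<in>{0..<length xs}. f (cyc_window xs b k)) / length xs"
  using assms by (simp add: cyclic_strategy_def integral_pmf_of_set)

lemma expectation_card_inter_cyclic_strategy:
  assumes "distinct xs" and "b \<le> length xs" and "xs \<noteq> []"
  shows "measure_pmf.expectation (cyclic_strategy xs b) (\<lambda>S. real (card (S \<inter> A))) =
         real (card (set xs \<inter> A)) * b / length xs"
proof -
  have "(\<Sum>k\<in>{0..<length xs}. real (card (cyc_window xs b k \<inter> A)))
      = (\<Sum>k\<in>{0..<length xs}. \<Sum>x\<in>set xs \<inter> A. of_bool (x \<in> cyc_window xs b k))"
  proof (intro sum.cong refl)
    fix k
    have "cyc_window xs b k \<inter> A = set xs \<inter> A \<inter> {x. x \<in> cyc_window xs b k}"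
      using cyc_window_subset[OF assms(3)] by blast
    then show "real (card (cyc_window xs b k \<inter> A)) =
               (\<Sum>x\<in>set xs \<inter> A. of_bool (x \<in> cyc_window xs b k))"
      by simp
  qed
  also have "\<dots> = (\<Sum>x\<in>set xs \<inter> A. \<Sum>k\<in>{0..<length xs}. of_bool (x \<in> cyc_window xs b k))"
    by (rule sum.swap)
  also have "\<dots> = (\<Sum>x\<in>set xs \<inter> A. real b)"
  proof (intro sum.cong refl)
    fix x assume "x \<in> set xs \<inter> A"
    then have "card ({0..<length xs} \<inter> {k. x \<in> cyc_window xs b k}) = b"
      using card_cyc_windows_containing[OF assms(1,2)] by (simp add: Int_def)
    then show "(\<Sum>k\<in>{0..<length xs}. of_bool (x \<in> cyc_window xs b k)) = real b"
      by simp
  qed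
  finally show ?thesis using assms(3) by (simp add: expectation_cyclic_strategy)
qed

lemma expectation_mem_cyclic_strategy:
  assumes "distinct xs" and "b \<le> length xs" and "x \<in> set xs"
  shows "measure_pmf.expectation (cyclic_strategy xs b) (\<lambda>S. of_bool (x \<in> S)) = real b / length xs"
proof -
  have "real (card (S \<inter> {x})) = of_bool (x \<in> S)" for S by (cases "x \<in> S") auto
  moreover have "set xs \<inter> {x} = {x}" and "xs \<noteq> []" using assms(3) by auto
  ultimately show ?thesis
    using expectation_card_inter_cyclic_strategy[OF assms(1,2), of "{x}"] by simp
qed

lemma cyclic_strategy_in_A1:
  assumes "set xs \<subseteq> V" and "xs \<noteq> []"
  shows "set_pmf (cyclic_strategy xs b) \<subseteq> A1 V b"
  using assms cyc_window_subset[OF assms(2)] card_cyc_window_le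
  by (auto simp: set_pmf_cyclic_strategy A1_def)

lemma cyclic_strategy_in_A2:
  assumes "set ys \<subseteq> E" and "ys \<noteq> []"
  shows "set_pmf (cyclic_strategy ys b) \<subseteq> A2 E b"
  using assms cyc_window_subset[OF assms(2)] card_cyc_window_le
  by (auto simp: set_pmf_cyclic_strategy A2_def)

lemma card_mem_set_pmf_cyclic_strategy:
  assumes "distinct xs" and "b \<le> length xs" and "xs \<noteq> []" and "S \<in> set_pmf (cyclic_strategy xs b)"
  shows "card S = b"
  using assms card_cyc_window[OF assms(1,2)] by (auto simp: set_pmf_cyclic_strategy)

lemma expectation_card_cyclic_strategy:
  assumes "distinct xs" and "b \<le> length xs" and "xs \<noteq> []"
  shows "measure_pmf.expectation (cyclic_strategy xs b) (\<lambda>S. real (card S)) = b"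
proof -
  have "measure_pmf.expectation (cyclic_strategy xs b) (\<lambda>S. real (card S)) =
        measure_pmf.expectation (cyclic_strategy xs b) (\<lambda>S. real b)"
    using card_mem_set_pmf_cyclic_strategy[OF assms] by (intro integral_cong_AE) (auto simp: AE_measure_pmf_iff)
  then show ?thesis by simp
qed

definition expected_detections :: "('v \<Rightarrow> 'e set) \<Rightarrow> 'v set pmf \<Rightarrow> 'e set \<Rightarrow> real" where
  "expected_detections C \<sigma>1 T = measure_pmf.expectation \<sigma>1 (\<lambda>S. real (Fdet C S T))"

lemma finite_set_pmf_if_A1: "finite V \<Longrightarrow> set_pmf \<sigma> \<subseteq> A1 V b \<Longrightarrow> finite (set_pmf \<sigma>)"
  by (rule finite_subset[of _ "Pow V"]) (auto simp: A1_def)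

lemma finite_set_pmf_if_A2: "finite E \<Longrightarrow> set_pmf \<sigma> \<subseteq> A2 E b \<Longrightarrow> finite (set_pmf \<sigma>)"
  by (rule finite_subset[of _ "Pow E"]) (auto simp: A2_def)

context
  fixes C :: "'v \<Rightarrow> 'e set" and \<sigma>1 :: "'v set pmf" and \<sigma>2 :: "'e set pmf"
  assumes fin1: "finite (set_pmf \<sigma>1)" and fin2: "finite (set_pmf \<sigma>2)"
begin

lemma U1_eq_expectation_defender:
  "U1 C \<sigma>1 \<sigma>2 = measure_pmf.expectation \<sigma>1 (\<lambda>S. measure_pmf.expectation \<sigma>2 (\<lambda>T. real (Fdet C S T)))"
  unfolding U1_def by (rule expectation_pair_pmf_finite[OF fin1 fin2])

lemma U1_eq_expectation_attacker:
  "U1 C \<sigma>1 \<sigma>2 = measure_pmf.expectation \<sigma>2 (expected_detections C \<sigma>1)"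
  unfolding U1_eq_expectation_defender expected_detections_def
  by (rule expectation_swap_finite[OF fin1 fin2])

lemma U2_eq_expectation_attacker:
  "U2 C \<sigma>1 \<sigma>2 = measure_pmf.expectation \<sigma>2 (\<lambda>T. real (card T) - expected_detections C \<sigma>1 T)"
proof -
  have "U2 C \<sigma>1 \<sigma>2 = measure_pmf.expectation \<sigma>2
          (\<lambda>T. measure_pmf.expectation \<sigma>1 (\<lambda>S. real (card T) - real (Fdet C S T)))"
    unfolding U2_def expectation_pair_pmf_finite[OF fin1 fin2] by (rule expectation_swap_finite[OF fin1 fin2])
  then show ?thesis
    using fin1 by (simp add: expected_detections_def integrable_measure_pmf_finite)
qed

lemma U1_add_U2: "U1 C \<sigma>1 \<sigma>2 + U2 C \<sigma>1 \<sigma>2 = measure_pmf.expectation \<sigma>2 (\<lambda>T. real (card T))"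
  unfolding U1_eq_expectation_attacker U2_eq_expectation_attacker
  using fin2 by (simp add: integrable_measure_pmf_finite)

lemma detection_rate_eq_expectation_attacker:
  "detection_rate C \<sigma>1 \<sigma>2 = measure_pmf.expectation \<sigma>2 (\<lambda>T. expected_detections C \<sigma>1 T / real (card T))"
proof -
  have "detection_rate C \<sigma>1 \<sigma>2 = measure_pmf.expectation \<sigma>2
          (\<lambda>T. measure_pmf.expectation \<sigma>1 (\<lambda>S. real (Fdet C S T) / real (card T)))"
    unfolding detection_rate_def expectation_pair_pmf_finite[OF fin1 fin2]
    by (rule expectation_swap_finite[OF fin1 fin2])
  then show ?thesis by (simp add: expected_detections_def)
qed

end

lemma U2_return_pmf:
  "finite (set_pmf \<sigma>1) \<Longrightarrow> U2 C \<sigma>1 (return_pmf T) = real (card T) - expected_detections C \<sigma>1 T"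
  by (simp add: U2_eq_expectation_attacker)

lemma Fdet_insert:
  assumes "finite T" and "e \<notin> T"
  shows "Fdet C S (insert e T) = Fdet C S T + of_bool (e \<in> CS C S)"
proof (cases "e \<in> CS C S")
  case True
  then have "CS C S \<inter> insert e T = insert e (CS C S \<inter> T)" by auto
  then show ?thesis using assms True by (simp add: Fdet_def)
next
  case False
  then have "CS C S \<inter> insert e T = CS C S \<inter> T" by auto
  then show ?thesis using False by (simp add: Fdet_def)
qed

subsection \<open>Guarantees of cyclic strategies\<close>

lemma expected_detections_cyclic_cover_ge:
  assumes cover: "set_cover V E C (set xs)" and xs: "distinct xs" "b \<le> length xs"
    and T: "T \<subseteq> E" "finite T"
  shows "real (card T) * b / length xs \<le> expected_detections C (cyclic_strategy xs b) T"
proof (cases "T = {}")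
  case True
  then show ?thesis by (simp add: expected_detections_def Fdet_def)
next
  case False
  let ?P = "cyclic_strategy xs b"
  have "xs \<noteq> []" using False cover T(1) by (auto simp: set_cover_def CS_def)
  then have fin: "finite (set_pmf ?P)" by (rule finite_set_pmf_cyclic_strategy)
  have "\<forall>e\<in>T. \<exists>i\<in>set xs. e \<in> C i" using cover T(1) by (auto simp: set_cover_def CS_def)
  then obtain cov where cov: "\<And>e. e \<in> T \<Longrightarrow> cov e \<in> set xs \<and> e \<in> C (cov e)" by metis
  have "real (card T) * b / length xs = (\<Sum>e\<in>T. measure_pmf.expectation ?P (\<lambda>S. of_bool (cov e \<in> S)))"
    using expectation_mem_cyclic_strategy[OF xs] cov by simp
  also have "\<dots> \<le> (\<Sum>e\<in>T. measure_pmf.expectation ?P (\<lambda>S. of_bool (e \<in> CS C S)))"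
    using cov by (intro sum_mono expectation_mono_finite[OF fin]) (auto simp: CS_def)
  also have "\<dots> = measure_pmf.expectation ?P (\<lambda>S. \<Sum>e\<in>T. of_bool (e \<in> CS C S))"
    using fin by (simp add: integrable_measure_pmf_finite)
  also have "\<dots> = expected_detections C ?P T"
    using T(2) by (simp add: expected_detections_def Fdet_def Int_commute)
  finally show ?thesis .
qed

lemma expectation_Fdet_cyclic_packing_le:
  assumes packing: "set_packing V E C (set ys)" and ys: "distinct ys" "b2 \<le> length ys" "ys \<noteq> []"
    and S: "finite S" "S \<subseteq> V" "card S \<le> b1"
  shows "measure_pmf.expectation (cyclic_strategy ys b2) (\<lambda>T. real (Fdet C S T))
           \<le> real b1 * b2 / max b1 (length ys)"
proof -
  have "card (set ys \<inter> CS C S) \<le> b1"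
    using Fdet_le_card_of_set_packing[OF S(1,2) packing] S(3) by (simp add: Fdet_def Int_commute)
  moreover have "card (set ys \<inter> CS C S) \<le> length ys"
    using card_mono[of "set ys" "set ys \<inter> CS C S"] distinct_card[OF ys(1)] by auto
  ultimately have "real (card (set ys \<inter> CS C S)) / length ys \<le> real b1 / max b1 (length ys)"
    using ys(3) by (cases "b1 \<le> length ys") (auto simp: max_def divide_right_mono)
  then have "real b2 * (real (card (set ys \<inter> CS C S)) / length ys) \<le> real b2 * (real b1 / max b1 (length ys))"
    by (rule mult_left_mono) simp
  then have "real (card (set ys \<inter> CS C S)) * b2 / length ys \<le> real b1 * b2 / max b1 (length ys)"
    by (simp add: mult.commute)
  moreover have "measure_pmf.expectation (cyclic_strategy ys b2) (\<lambda>T. real (Fdet C S T))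
      = real (card (set ys \<inter> CS C S)) * b2 / length ys"
    using expectation_card_inter_cyclic_strategy[OF ys, of "CS C S"] by (simp add: Fdet_def Int_commute)
  ultimately show ?thesis by simp
qed

lemma U1_cyclic_cover_ge:
  assumes model: "detection_model V E C" and cover: "set_cover V E C (set xs)"
    and xs: "distinct xs" "b1 \<le> length xs" and \<sigma>2: "set_pmf \<sigma>2 \<subseteq> A2 E b2"
  shows "measure_pmf.expectation \<sigma>2 (\<lambda>T. real (card T)) * b1 / length xs
           \<le> U1 C (cyclic_strategy xs b1) \<sigma>2"
proof -
  have finE: "finite E" using model by (simp add: detection_model_def)
  have "xs \<noteq> []" using set_cover_list_nonempty[OF model cover] .
  have fin2: "finite (set_pmf \<sigma>2)" using finite_set_pmf_if_A2[OF finE \<sigma>2] .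
  have "measure_pmf.expectation \<sigma>2 (\<lambda>T. real (card T)) * b1 / length xs
      = measure_pmf.expectation \<sigma>2 (\<lambda>T. real (card T) * b1 / length xs)" by simp
  also have "\<dots> \<le> measure_pmf.expectation \<sigma>2 (expected_detections C (cyclic_strategy xs b1))"
  proof (rule expectation_mono_finite[OF fin2])
    fix T assume "T \<in> set_pmf \<sigma>2"
    then have "T \<subseteq> E" using \<sigma>2 by (auto simp: A2_def)
    then show "real (card T) * b1 / length xs \<le> expected_detections C (cyclic_strategy xs b1) T"
      using finE by (intro expected_detections_cyclic_cover_ge[OF cover xs]) (auto intro: finite_subset)
  qed
  also have "\<dots> = U1 C (cyclic_strategy xs b1) \<sigma>2"
    using \<open>xs \<noteq> []\<close> fin2 by (simp add: U1_eq_expectation_attacker finite_set_pmf_cyclic_strategy)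
  finally show ?thesis .
qed

lemma U2_cyclic_cover_le:
  assumes model: "detection_model V E C" and cover: "set_cover V E C (set xs)"
    and xs: "distinct xs" "b1 \<le> length xs" and \<sigma>2: "set_pmf \<sigma>2 \<subseteq> A2 E b2"
  shows "U2 C (cyclic_strategy xs b1) \<sigma>2 \<le> b2 - b1 * b2 / length xs"
proof -
  have finE: "finite E" using model by (simp add: detection_model_def)
  have "xs \<noteq> []" using set_cover_list_nonempty[OF model cover] .
  have fin2: "finite (set_pmf \<sigma>2)" using finite_set_pmf_if_A2[OF finE \<sigma>2] .
  define c where "c = measure_pmf.expectation \<sigma>2 (\<lambda>T. real (card T))"
  have "c \<le> measure_pmf.expectation \<sigma>2 (\<lambda>T. real b2)"
    unfolding c_def using \<sigma>2 by (intro expectation_mono_finite[OF fin2]) (auto simp: A2_def)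
  then have "c \<le> b2" by simp
  moreover have "U2 C (cyclic_strategy xs b1) \<sigma>2 \<le> c * (1 - b1 / length xs)"
    using U1_add_U2[OF finite_set_pmf_cyclic_strategy[OF \<open>xs \<noteq> []\<close>] fin2, of C b1]
      U1_cyclic_cover_ge[OF model cover xs \<sigma>2]
    by (simp add: c_def algebra_simps)
  moreover have "0 \<le> 1 - b1 / length xs" using xs(2) \<open>xs \<noteq> []\<close> by simp
  ultimately have "U2 C (cyclic_strategy xs b1) \<sigma>2 \<le> b2 * (1 - b1 / length xs)"
    by (meson mult_right_mono order_trans)
  then show ?thesis by (simp add: algebra_simps)
qed

lemma U1_cyclic_packing_le:
  assumes model: "detection_model V E C" and packing: "set_packing V E C (set ys)"
    and ys: "distinct ys" "b2 \<le> length ys" "ys \<noteq> []" and \<sigma>1: "set_pmf \<sigma>1 \<subseteq> A1 V b1"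
  shows "U1 C \<sigma>1 (cyclic_strategy ys b2) \<le> real b1 * b2 / max b1 (length ys)"
proof -
  have finV: "finite V" using model by (simp add: detection_model_def)
  have fin1: "finite (set_pmf \<sigma>1)" using finite_set_pmf_if_A1[OF finV \<sigma>1] .
  have "U1 C \<sigma>1 (cyclic_strategy ys b2)
      \<le> measure_pmf.expectation \<sigma>1 (\<lambda>S. real b1 * b2 / max b1 (length ys))"
    unfolding U1_eq_expectation_defender[OF fin1 finite_set_pmf_cyclic_strategy[OF ys(3)]]
  proof (rule expectation_mono_finite[OF fin1])
    fix S assume "S \<in> set_pmf \<sigma>1"
    then have "S \<subseteq> V" "card S \<le> b1" using \<sigma>1 by (auto simp: A1_def)
    then show "measure_pmf.expectation (cyclic_strategy ys b2) (\<lambda>T. real (Fdet C S T))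
                 \<le> real b1 * b2 / max b1 (length ys)"
      using finV by (intro expectation_Fdet_cyclic_packing_le[OF packing ys]) (auto intro: finite_subset)
  qed
  then show ?thesis by simp
qed


subsection \<open>Nash equilibria\<close>

context
  fixes V :: "'v set" and E :: "'e set" and C :: "'v \<Rightarrow> 'e set" and b1 b2 :: nat
    and \<sigma>1 :: "'v set pmf" and \<sigma>2 :: "'e set pmf"
  assumes model: "detection_model V E C" and nash: "nash V E C b1 b2 \<sigma>1 \<sigma>2"
begin

lemma nash_in_A1: "set_pmf \<sigma>1 \<subseteq> A1 V b1"
  and nash_in_A2: "set_pmf \<sigma>2 \<subseteq> A2 E b2"
  and nash_defender_best: "set_pmf \<tau>1 \<subseteq> A1 V b1 \<Longrightarrow> U1 C \<tau>1 \<sigma>2 \<le> U1 C \<sigma>1 \<sigma>2"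
  and nash_attacker_best: "set_pmf \<tau>2 \<subseteq> A2 E b2 \<Longrightarrow> U2 C \<sigma>1 \<tau>2 \<le> U2 C \<sigma>1 \<sigma>2"
  using nash by (auto simp: nash_def eps_nash_def)

lemma nash_finite_set_pmf: "finite (set_pmf \<sigma>1)" "finite (set_pmf \<sigma>2)"
  using model nash_in_A1 nash_in_A2
  by (auto simp: detection_model_def intro: finite_set_pmf_if_A1 finite_set_pmf_if_A2)

lemma nash_finite_attack:
  assumes "T \<in> set_pmf \<sigma>2"
  shows "finite T"
proof -
  have "T \<subseteq> E" using assms nash_in_A2 by (auto simp: A2_def)
  then show ?thesis using model finite_subset unfolding detection_model_def by blast
qed

lemma nash_attack_le_U2:
  assumes "T \<in> A2 E b2"
  shows "real (card T) - expected_detections C \<sigma>1 T \<le> U2 C \<sigma>1 \<sigma>2"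
  using nash_attacker_best[of "return_pmf T"] assms by (simp add: U2_return_pmf[OF nash_finite_set_pmf(1)])

lemma nash_support_attack_eq_U2:
  assumes "T \<in> set_pmf \<sigma>2"
  shows "real (card T) - expected_detections C \<sigma>1 T = U2 C \<sigma>1 \<sigma>2"
  using nash_finite_set_pmf(2) _ _ assms
proof (rule eq_on_support_if_expectation_ge)
  show "real (card T) - expected_detections C \<sigma>1 T \<le> U2 C \<sigma>1 \<sigma>2" if "T \<in> set_pmf \<sigma>2" for T
    using that nash_in_A2 by (intro nash_attack_le_U2) auto
  show "U2 C \<sigma>1 \<sigma>2 \<le> measure_pmf.expectation \<sigma>2 (\<lambda>T. real (card T) - expected_detections C \<sigma>1 T)"
    by (simp add: U2_eq_expectation_attacker[OF nash_finite_set_pmf])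
qed

lemma nash_unused_budget_detected:
  assumes T: "T \<in> set_pmf \<sigma>2" "card T < b2" and e: "e \<in> E - T" and S: "S \<in> set_pmf \<sigma>1"
  shows "e \<in> CS C S"
proof -
  have finT: "finite T" using nash_finite_attack[OF T(1)] .
  have "insert e T \<in> A2 E b2" using T e nash_in_A2 finT by (auto simp: A2_def)
  moreover have "expected_detections C \<sigma>1 (insert e T)
      = expected_detections C \<sigma>1 T + measure_pmf.expectation \<sigma>1 (\<lambda>S. of_bool (e \<in> CS C S))"
    using e finT nash_finite_set_pmf(1)
    by (simp add: expected_detections_def Fdet_insert integrable_measure_pmf_finite)
  \<comment> \<open>Adding \<open>e\<close> to the best response \<open>T\<close> gains \<open>1 - P(e detected)\<close>, which cannot be positive.\<close>
  ultimately have "(1::real) \<le> measure_pmf.expectation \<sigma>1 (\<lambda>S. of_bool (e \<in> CS C S))"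
    using nash_attack_le_U2[of "insert e T"] nash_support_attack_eq_U2[OF T(1)] e finT by simp
  then have "(of_bool (e \<in> CS C S) :: real) = 1"
    by (intro eq_on_support_if_expectation_ge[OF nash_finite_set_pmf(1) _ _ S]) auto
  then show ?thesis by simp
qed

lemma nash_unused_budget_U2_ge:
  assumes T: "T \<in> set_pmf \<sigma>2" "card T < b2"
  shows "real (nstar V E C) - b1 \<le> U2 C \<sigma>1 \<sigma>2"
proof -
  have finT: "finite T" using nash_finite_attack[OF T(1)] .
  have "expected_detections C \<sigma>1 T \<le> measure_pmf.expectation \<sigma>1 (\<lambda>S. real (card T) + b1 - nstar V E C)"
    unfolding expected_detections_def
  proof (rule expectation_mono_finite[OF nash_finite_set_pmf(1)])
    fix S assume S: "S \<in> set_pmf \<sigma>1"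
    then have "S \<subseteq> V" "card S \<le> b1" using nash_in_A1 by (auto simp: A1_def)
    have "E - CS C S \<subseteq> T - CS C S" using nash_unused_budget_detected[OF T _ S] by blast
    then have "card (E - CS C S) \<le> card (T - CS C S)" using finT by (intro card_mono) auto
    moreover have "card (T - CS C S) + Fdet C S T = card T"
      using card_Int_Diff[OF finT, of "CS C S"] by (simp add: Fdet_def Int_commute)
    ultimately show "real (Fdet C S T) \<le> real (card T) + b1 - nstar V E C"
      using nstar_le_card_add_card_uncovered[OF model \<open>S \<subseteq> V\<close>] \<open>card S \<le> b1\<close> by linarith
  qed
  then show ?thesis using nash_support_attack_eq_U2[OF T(1)] by simp
qed

lemma nash_U2_le:
  assumes "b1 \<le> nstar V E C"
  shows "U2 C \<sigma>1 \<sigma>2 \<le> b2 - b1 * b2 / nstar V E C"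
proof -
  obtain xs where xs: "set_cover V E C (set xs)" "distinct xs" "length xs = nstar V E C"
    using min_set_cover_exists[OF model] .
  then have "xs \<noteq> []" using set_cover_list_nonempty[OF model] by blast
  let ?P = "cyclic_strategy xs b1"
  have P: "set_pmf ?P \<subseteq> A1 V b1" "finite (set_pmf ?P)"
    using xs(1) cyclic_strategy_in_A1[of xs V b1] finite_set_pmf_cyclic_strategy[OF \<open>xs \<noteq> []\<close>]
      \<open>xs \<noteq> []\<close> by (auto simp: set_cover_def)
  \<comment> \<open>\<open>U1 + U2\<close> depends on the attacker only, so the defender's best response minimises \<open>U2\<close>.\<close>
  have "U2 C \<sigma>1 \<sigma>2 \<le> U2 C ?P \<sigma>2"
    using U1_add_U2[OF nash_finite_set_pmf, of C] U1_add_U2[OF P(2) nash_finite_set_pmf(2), of C]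
      nash_defender_best[OF P(1)] by linarith
  also have "\<dots> \<le> b2 - b1 * b2 / nstar V E C"
    using U2_cyclic_cover_le[OF model xs(1,2) _ nash_in_A2] xs(3) assms by simp
  finally show ?thesis .
qed

lemma nash_attacks_full:
  assumes "b1 < nstar V E C" and "b2 < nstar V E C" and T: "T \<in> set_pmf \<sigma>2"
  shows "card T = b2"
proof (rule ccontr)
  assume "card T \<noteq> b2"
  then have "card T < b2" using T nash_in_A2 by (auto simp: A2_def)
  define n where "n = real (nstar V E C)"
  have "n - b1 \<le> b2 - b1 * b2 / n"
    using nash_unused_budget_U2_ge[OF T \<open>card T < b2\<close>] nash_U2_le assms(1) n_def by fastforce
  then have "(n - b1) * n \<le> b2 * (n - b1)"
    using assms(1) n_def by (simp add: field_simps)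
  then have "n \<le> b2" using assms(1) n_def by (simp add: mult.commute)
  then show False using assms(2) n_def by simp
qed

lemma nash_U1_add_U2:
  assumes "b1 < nstar V E C" and "b2 < nstar V E C"
  shows "U1 C \<sigma>1 \<sigma>2 + U2 C \<sigma>1 \<sigma>2 = b2"
proof -
  have "measure_pmf.expectation \<sigma>2 (\<lambda>T. real (card T)) = measure_pmf.expectation \<sigma>2 (\<lambda>T. real b2)"
    using nash_attacks_full[OF assms] by (intro integral_cong_AE) (auto simp: AE_measure_pmf_iff)
  then show ?thesis using U1_add_U2[OF nash_finite_set_pmf] by simp
qed

lemma nash_U1_ge:
  assumes "b1 < nstar V E C" and "b2 < nstar V E C"
  shows "b1 * b2 / nstar V E C \<le> U1 C \<sigma>1 \<sigma>2"
  using nash_U1_add_U2[OF assms] nash_U2_le assms by fastforce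

lemma nash_U1_le:
  assumes "b1 < nstar V E C" and "b2 < nstar V E C" and "0 < b2" and "b2 \<le> mstar V E C"
  shows "U1 C \<sigma>1 \<sigma>2 \<le> b1 * b2 / max b1 (mstar V E C)"
proof -
  have finE: "finite E" using model by (simp add: detection_model_def)
  obtain ys where ys: "set_packing V E C (set ys)" "distinct ys" "length ys = mstar V E C"
    using max_set_packing_exists[OF finE] .
  then have "ys \<noteq> []" using assms(3,4) by auto
  let ?P = "cyclic_strategy ys b2"
  have P: "set_pmf ?P \<subseteq> A2 E b2" "finite (set_pmf ?P)"
    using ys(1) cyclic_strategy_in_A2[of ys E b2] finite_set_pmf_cyclic_strategy[OF \<open>ys \<noteq> []\<close>]
      \<open>ys \<noteq> []\<close> by (auto simp: set_packing_def)
  have "U1 C \<sigma>1 ?P + U2 C \<sigma>1 ?P = b2"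
    using U1_add_U2[OF nash_finite_set_pmf(1) P(2)] expectation_card_cyclic_strategy[OF ys(2) _ \<open>ys \<noteq> []\<close>]
      ys(3) assms(4) by simp
  moreover have "U1 C \<sigma>1 ?P \<le> b1 * b2 / max b1 (mstar V E C)"
    using U1_cyclic_packing_le[OF model ys(1,2) _ \<open>ys \<noteq> []\<close> nash_in_A1] ys(3) assms(4) by simp
  ultimately show ?thesis
    using nash_attacker_best[OF P(1)] nash_U1_add_U2[OF assms(1,2)] by linarith
qed

lemma nash_detection_rate:
  assumes "b1 < nstar V E C" and "b2 < nstar V E C"
  shows "detection_rate C \<sigma>1 \<sigma>2 = U1 C \<sigma>1 \<sigma>2 / b2"
proof -
  have "detection_rate C \<sigma>1 \<sigma>2 = measure_pmf.expectation \<sigma>2 (\<lambda>T. expected_detections C \<sigma>1 T / b2)"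
    unfolding detection_rate_eq_expectation_attacker[OF nash_finite_set_pmf]
    using nash_attacks_full[OF assms] by (intro integral_cong_AE) (auto simp: AE_measure_pmf_iff)
  then show ?thesis by (simp add: U1_eq_expectation_attacker[OF nash_finite_set_pmf])
qed

lemma nash_detection_rate_le:
  assumes "b1 < nstar V E C" and "b2 < nstar V E C" and "0 < b2" and "b2 \<le> mstar V E C"
  shows "max b1 (mstar V E C) / nstar V E C * detection_rate C \<sigma>1 \<sigma>2 \<le> b1 / nstar V E C"
proof -
  have "detection_rate C \<sigma>1 \<sigma>2 \<le> (b1 * b2 / max b1 (mstar V E C)) / b2"
    unfolding nash_detection_rate[OF assms(1,2)] using nash_U1_le[OF assms] by (rule divide_right_mono) simp
  also have "\<dots> = b1 / max b1 (mstar V E C)" using assms(3) by simp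
  finally have "max b1 (mstar V E C) / nstar V E C * detection_rate C \<sigma>1 \<sigma>2
      \<le> max b1 (mstar V E C) / nstar V E C * (b1 / max b1 (mstar V E C))"
    by (rule mult_left_mono) simp
  then show ?thesis using assms(3,4) by simp
qed

end

context
  fixes V :: "'v set" and E :: "'e set" and C :: "'v \<Rightarrow> 'e set" and b1 b2 :: nat
    and xs :: "'v list" and ys :: "'e list"
  assumes model: "detection_model V E C"
    and cover: "set_cover V E C (set xs)" and xs: "distinct xs" "b1 \<le> length xs"
    and packing: "set_packing V E C (set ys)" and ys: "distinct ys" "b2 \<le> length ys" "ys \<noteq> []"
begin

lemma cyclic_profile_in_A1: "set_pmf (cyclic_strategy xs b1) \<subseteq> A1 V b1"
  using cover set_cover_list_nonempty[OF model cover] by (intro cyclic_strategy_in_A1) (auto simp: set_cover_def)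

lemma cyclic_profile_in_A2: "set_pmf (cyclic_strategy ys b2) \<subseteq> A2 E b2"
  using packing ys(3) by (intro cyclic_strategy_in_A2) (auto simp: set_packing_def)

lemma cyclic_profile_U1_add_U2:
  "U1 C (cyclic_strategy xs b1) (cyclic_strategy ys b2) + U2 C (cyclic_strategy xs b1) (cyclic_strategy ys b2) = b2"
  using U1_add_U2[OF finite_set_pmf_cyclic_strategy[OF set_cover_list_nonempty[OF model cover]]
      finite_set_pmf_cyclic_strategy[OF ys(3)]] expectation_card_cyclic_strategy[OF ys]
  by simp

lemma cyclic_profile_U1_ge:
  "b1 * b2 / length xs \<le> U1 C (cyclic_strategy xs b1) (cyclic_strategy ys b2)"
  using U1_cyclic_cover_ge[OF model cover xs cyclic_profile_in_A2] expectation_card_cyclic_strategy[OF ys]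
  by (simp add: mult.commute)

lemma cyclic_profile_U1_le:
  "U1 C (cyclic_strategy xs b1) (cyclic_strategy ys b2) \<le> b1 * b2 / max b1 (length ys)"
  using U1_cyclic_packing_le[OF model packing ys cyclic_profile_in_A1] by simp

lemma cyclic_profile_eps_nash:
  "eps_nash V E C b1 b2 (b1 * b2 / max b1 (length ys) - b1 * b2 / length xs)
     (cyclic_strategy xs b1) (cyclic_strategy ys b2)"
  unfolding eps_nash_def
proof (intro conjI allI impI cyclic_profile_in_A1 cyclic_profile_in_A2)
  fix \<tau>1 assume "set_pmf \<tau>1 \<subseteq> A1 V b1"
  then show "U1 C \<tau>1 (cyclic_strategy ys b2) - (b1 * b2 / max b1 (length ys) - b1 * b2 / length xs)
               \<le> U1 C (cyclic_strategy xs b1) (cyclic_strategy ys b2)"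
    using U1_cyclic_packing_le[OF model packing ys] cyclic_profile_U1_ge by fastforce
next
  fix \<tau>2 assume "set_pmf \<tau>2 \<subseteq> A2 E b2"
  then show "U2 C (cyclic_strategy xs b1) \<tau>2 - (b1 * b2 / max b1 (length ys) - b1 * b2 / length xs)
               \<le> U2 C (cyclic_strategy xs b1) (cyclic_strategy ys b2)"
    using U2_cyclic_cover_le[OF model cover xs] cyclic_profile_U1_add_U2 cyclic_profile_U1_le by fastforce
qed

end

lemma cyclic_cover_detection_rate_ge:
  assumes model: "detection_model V E C" and cover: "set_cover V E C (set xs)"
    and xs: "distinct xs" "b1 \<le> length xs" and \<sigma>2: "set_pmf \<sigma>2 \<subseteq> A2 E b2 - {{}}"
  shows "b1 / length xs \<le> detection_rate C (cyclic_strategy xs b1) \<sigma>2"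
proof -
  have finE: "finite E" using model by (simp add: detection_model_def)
  have "xs \<noteq> []" using set_cover_list_nonempty[OF model cover] .
  have fin2: "finite (set_pmf \<sigma>2)" using finite_set_pmf_if_A2[OF finE] \<sigma>2 by blast
  have "measure_pmf.expectation \<sigma>2 (\<lambda>T. real b1 / length xs)
      \<le> measure_pmf.expectation \<sigma>2 (\<lambda>T. expected_detections C (cyclic_strategy xs b1) T / card T)"
  proof (rule expectation_mono_finite[OF fin2])
    fix T assume "T \<in> set_pmf \<sigma>2"
    then have T: "T \<subseteq> E" "T \<noteq> {}" using \<sigma>2 by (auto simp: A2_def)
    then have "finite T" "0 < card T" using finE by (auto intro: finite_subset simp: card_gt_0_iff)
    then show "real b1 / length xs \<le> expected_detections C (cyclic_strategy xs b1) T / card T"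
      using expected_detections_cyclic_cover_ge[OF cover xs T(1)] by (simp add: field_simps)
  qed
  then show ?thesis
    using fin2 \<open>xs \<noteq> []\<close>
    by (simp add: detection_rate_eq_expectation_attacker finite_set_pmf_cyclic_strategy)
qed

lemma min_cover_cyclic_detection_rate_attained:
  assumes model: "detection_model V E C"
    and cover: "set_cover V E C (set xs)" "card (set xs) = nstar V E C"
    and xs: "distinct xs" "b1 \<le> length xs" and "0 < b2"
  shows "\<exists>\<sigma>2. set_pmf \<sigma>2 \<subseteq> A2 E b2 - {{}} \<and>
           detection_rate C (cyclic_strategy xs b1) \<sigma>2 = b1 / length xs"
proof -
  have "xs \<noteq> []" using set_cover_list_nonempty[OF model cover(1)] .
  then have x: "hd xs \<in> set xs" by simp
  obtain e where e: "e \<in> C (hd xs)" "\<forall>i\<in>set xs. e \<in> C i \<longrightarrow> i = hd xs"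
    using min_set_cover_private_element[OF model cover x] by blast
  have "e \<in> E" using e(1) x cover(1) by (auto simp: set_cover_def CS_def)
  have "detection_rate C (cyclic_strategy xs b1) (return_pmf {e})
      = measure_pmf.expectation (cyclic_strategy xs b1) (\<lambda>S. of_bool (hd xs \<in> S))"
  proof -
    have "e \<in> CS C S \<longleftrightarrow> hd xs \<in> S" if "S \<in> set_pmf (cyclic_strategy xs b1)" for S
      using that e cyc_window_subset[OF \<open>xs \<noteq> []\<close>]
      by (auto simp: set_pmf_cyclic_strategy[OF \<open>xs \<noteq> []\<close>] CS_def)
    then show ?thesis
      using \<open>xs \<noteq> []\<close>
      by (simp add: detection_rate_eq_expectation_attacker finite_set_pmf_cyclic_strategy
          expected_detections_def Fdet_def)
         (intro integral_cong_AE, auto simp: AE_measure_pmf_iff)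
  qed
  also have "\<dots> = b1 / length xs" by (rule expectation_mem_cyclic_strategy[OF xs x])
  finally show ?thesis using \<open>e \<in> E\<close> \<open>0 < b2\<close> by (intro exI[of _ "return_pmf {e}"]) (auto simp: A2_def)
qed

theorem theorem2:
  fixes V :: "'v set" and E :: "'e set" and C :: "'v \<Rightarrow> 'e set"
    and b1 b2 :: nat and \<epsilon> :: real
    and Smin :: "'v set" and Tmax :: "'e set" and xs :: "'v list" and ys :: "'e list"
  assumes model: "detection_model V E C"
    and b1_pos: "0 < b1" and b2_pos: "0 < b2"
    and b1_lt: "b1 < nstar V E C" and b2_lt: "b2 < mstar V E C"
    and eps_def: "\<epsilon> = real b1 * real b2 *
                    (1 / real (max b1 (mstar V E C)) - 1 / real (nstar V E C))"
    and Smin: "set_cover V E C Smin" "card Smin = nstar V E C"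
    and Tmax: "set_packing V E C Tmax" "card Tmax = mstar V E C"
    and xs: "distinct xs" "set xs = Smin"
    and ys: "distinct ys" "set ys = Tmax"
  shows
    "eps_nash V E C b1 b2 \<epsilon> (cyclic_strategy xs b1) (cyclic_strategy ys b2)
     \<and> (\<forall>\<sigma>1s \<sigma>2s. nash V E C b1 b2 \<sigma>1s \<sigma>2s \<longrightarrow>
          \<bar>U1 C (cyclic_strategy xs b1) (cyclic_strategy ys b2) - U1 C \<sigma>1s \<sigma>2s\<bar> \<le> \<epsilon> \<and>
          \<bar>U2 C (cyclic_strategy xs b1) (cyclic_strategy ys b2) - U2 C \<sigma>1s \<sigma>2s\<bar> \<le> \<epsilon>)
     \<and> (\<forall>\<sigma>2. set_pmf \<sigma>2 \<subseteq> A2 E b2 - {{}} \<longrightarrow>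
          real b1 / real (nstar V E C) \<le> detection_rate C (cyclic_strategy xs b1) \<sigma>2)
     \<and> (\<exists>\<sigma>2. set_pmf \<sigma>2 \<subseteq> A2 E b2 - {{}} \<and>
          detection_rate C (cyclic_strategy xs b1) \<sigma>2 = real b1 / real (nstar V E C))
     \<and> (\<forall>\<sigma>1s \<sigma>2s. nash V E C b1 b2 \<sigma>1s \<sigma>2s \<longrightarrow>
          real b1 / real (nstar V E C) \<ge>
          real (max b1 (mstar V E C)) / real (nstar V E C) * detection_rate C \<sigma>1s \<sigma>2s)"
proof -
  have n: "length xs = nstar V E C" using xs Smin(2) distinct_card by metis
  have m: "length ys = mstar V E C" using ys Tmax(2) distinct_card by metis
  have cover: "set_cover V E C (set xs)" and packing: "set_packing V E C (set ys)"
    using Smin(1) Tmax(1) xs(2) ys(2) by simp_all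
  have "mstar V E C \<le> nstar V E C"
    using card_set_packing_le_card_set_cover[OF model Smin(1) Tmax(1)] Smin(2) Tmax(2) by simp
  then have b2_lt_n: "b2 < nstar V E C" using b2_lt by linarith
  have "ys \<noteq> []" using m b2_lt by auto
  have b1_le: "b1 \<le> length xs" and b2_le: "b2 \<le> length ys" using n m b1_lt b2_lt by simp_all
  note profile = cyclic_profile_U1_ge cyclic_profile_U1_le cyclic_profile_U1_add_U2
  note profile = profile[OF model cover xs(1) b1_le packing ys(1) b2_le \<open>ys \<noteq> []\<close>, unfolded n m]
  have eps: "\<epsilon> = b1 * b2 / max b1 (mstar V E C) - b1 * b2 / nstar V E C"
    using eps_def by (simp add: right_diff_distrib)
  note nash_bounds = nash_U1_ge[OF model _ b1_lt b2_lt_n] nash_U1_le[OF model _ b1_lt b2_lt_n b2_pos]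
    nash_U1_add_U2[OF model _ b1_lt b2_lt_n]
  show ?thesis
  proof (intro conjI allI impI)
    show "eps_nash V E C b1 b2 \<epsilon> (cyclic_strategy xs b1) (cyclic_strategy ys b2)"
      using cyclic_profile_eps_nash[OF model cover xs(1) b1_le packing ys(1) b2_le \<open>ys \<noteq> []\<close>] eps n m
      by simp
  next
    fix \<sigma>1s \<sigma>2s assume "nash V E C b1 b2 \<sigma>1s \<sigma>2s"
    note nash_bounds = nash_bounds[OF this]
    show "\<bar>U1 C (cyclic_strategy xs b1) (cyclic_strategy ys b2) - U1 C \<sigma>1s \<sigma>2s\<bar> \<le> \<epsilon>"
      using profile nash_bounds b2_lt eps by (simp add: abs_le_iff)
    show "\<bar>U2 C (cyclic_strategy xs b1) (cyclic_strategy ys b2) - U2 C \<sigma>1s \<sigma>2s\<bar> \<le> \<epsilon>"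
      using profile nash_bounds b2_lt eps by (simp add: abs_le_iff)
  next
    fix \<sigma>2 assume "set_pmf \<sigma>2 \<subseteq> A2 E b2 - {{}}"
    then show "real b1 / real (nstar V E C) \<le> detection_rate C (cyclic_strategy xs b1) \<sigma>2"
      using cyclic_cover_detection_rate_ge[OF model cover xs(1) b1_le] n by simp
  next
    show "\<exists>\<sigma>2. set_pmf \<sigma>2 \<subseteq> A2 E b2 - {{}} \<and>
            detection_rate C (cyclic_strategy xs b1) \<sigma>2 = real b1 / real (nstar V E C)"
      using min_cover_cyclic_detection_rate_attained[OF model cover _ xs(1) b1_le b2_pos] xs(2) Smin(2) n
      by simp
  next
    fix \<sigma>1s \<sigma>2s assume "nash V E C b1 b2 \<sigma>1s \<sigma>2s"
    then show "real (max b1 (mstar V E C)) / real (nstar V E C) * detection_rate C \<sigma>1s \<sigma>2s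
        \<le> real b1 / real (nstar V E C)"
      using nash_detection_rate_le[OF model _ b1_lt b2_lt_n b2_pos] b2_lt by simp
  qed
qed

end
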